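(* Let $k\ge 0$ be an integer, put $K=k+6$ and $M=\dfrac{K}{\gcd(K,60)}$. For all integers $a_0,a_1,a_2$ with $a_0+a_1+a_2=k+3$ (equivalently, for every integral $G_2^{(1)}$-weight of level $k+2$, written in $A_2$ labels as explained in the context), $$D(a_1,a_2)\equiv D(a_0,a_1)\equiv D(a_2,a_0)\pmod M .$$ Equivalently, $\dim_{G_2}(b')\equiv\dim_{G_2}(Jb')\equiv\dim_{G_2}(J^2b')\pmod M$ for every integral level-$(k+2)$ $G_2^{(1)}$-weight $b'$.
   Context: For integers $a_1,a_2$ define $$D(a_1,a_2)=\frac{1}{120}(a_2-a_1)(a_2+1)(2a_2+a_1+3)(a_2+a_1+2)(a_2+2a_1+3)(a_1+1),$$ which is always an integer (it is the formal $G_2$ Weyl dimension). Integral $G_2^{(1)}$-weights of level $k+2$ are triples $(c_0;c_1,c_2)$ of integers (not necessarily nonnegative) with $c_0+2c_1+c_2=k+2$, with formal Weyl dimension $\dim_{G_2}(c_0;c_1,c_2)=\frac1{120}(c_1+1)(c_2+1)(c_1+c_2+2)(2c_1+c_2+3)(3c_1+c_2+4)(3c_1+2c_2+5)$. They correspond bijectively to integer triples $(a_0;a_1,a_2)$ with $a_0+a_1+a_2=k+3$ ("$A_2$ labels") via $\iota'(c_0;c_1,c_2)=(c_0;c_1,c_1+c_2+1)$, and then $\dim_{G_2}(c)=D(a_1,a_2)$. The $A_2$ simple current $J$ acts on $A_2$ labels by $J(a_0;a_1,a_2)=(a_2;a_0,a_1)$; on $G_2$ labels this is $J(c_0;c_1,c_2)=(c_1+c_2+1;c_0,c_1-c_0-1)$.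 *)

theory Defs
  imports Main
begin

text \<open>Formal G2 Weyl dimension in A2 labels. The product is always divisible by 120,
  so integer division is exact.\<close>
definition D :: "int \<Rightarrow> int \<Rightarrow> int" where
  "D a1 a2 = ((a2 - a1) * (a2 + 1) * (2*a2 + a1 + 3) * (a2 + a1 + 2) * (a2 + 2*a1 + 3) * (a1 + 1)) div 120"

end

theory Submission
  imports Defs "HOL-Number_Theory.Cong"
begin

(* With u = a1 + 1, v = a2 + 1 and K = k + 6 we have a0 + 1 = K - u - v and
   120 D(a1,a2) = P(u,v) for the sextic P(u,v) = u v (v - u) (v + u) (2v + u) (v + 2u),
   which is divisible by 120 (check residues modulo 8, 3 and 5).  The simple current
   acts as (u,v) |-> (K - u - v, u); for K = 0 this is a symmetry of P, so
   P(K - u - v, u) - P(u,v) is divisible by K, and a parity argument even gives 2K.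
   Hence K divides 60 (D(a0,a1) - D(a1,a2)), and as K / gcd(K,60) is coprime to
   60 / gcd(K,60), it divides D(a0,a1) - D(a1,a2). *)

definition dim_numerator :: "int \<Rightarrow> int \<Rightarrow> int" where
  "dim_numerator u v = u * v * (v - u) * (v + u) * (2*v + u) * (v + 2*u)"

lemma D_eq_dim_numerator_div: "D a b = dim_numerator (a + 1) (b + 1) div 120"
  unfolding D_def dim_numerator_def by (simp add: algebra_simps)

lemma dim_numerator_cong:
  "[u = u'] (mod m) \<Longrightarrow> [v = v'] (mod m) \<Longrightarrow> [dim_numerator u v = dim_numerator u' v'] (mod m)"
  unfolding dim_numerator_def by (intro cong_mult cong_add cong_diff cong_refl)

lemma dvd_dim_numerator_if_residues:
  assumes "m > 0" and "\<forall>i \<in> set [0..m - 1]. \<forall>j \<in> set [0..m - 1]. m dvd dim_numerator i j"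
  shows "m dvd dim_numerator u v"
proof -
  have "m dvd dim_numerator (u mod m) (v mod m)"
    using assms by (simp add: pos_mod_bound)
  moreover have "[dim_numerator (u mod m) (v mod m) = dim_numerator u v] (mod m)"
    by (intro dim_numerator_cong) (simp_all add: cong_def)
  ultimately show ?thesis
    using cong_dvd_iff by blast
qed

lemma dvd_dim_numerator: "120 dvd dim_numerator u v"
proof -
  have "8 dvd dim_numerator u v"
    by (rule dvd_dim_numerator_if_residues) (simp_all add: dim_numerator_def upto.simps del: set_upto)
  moreover have "3 dvd dim_numerator u v"
    by (rule dvd_dim_numerator_if_residues) (simp_all add: dim_numerator_def upto.simps del: set_upto)
  moreover have "5 dvd dim_numerator u v"
    by (rule dvd_dim_numerator_if_residues) (simp_all add: dim_numerator_def upto.simps del: set_upto)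
  ultimately show ?thesis
    by presburger
qed

lemma dim_numerator_rotate_diff:
  "2 * K dvd dim_numerator (K - u - v) u - dim_numerator u v"
proof -
  define Q where "Q = - u*K^4 + 5*u*v*K^3 - 10*u*v^2*K^2 + 10*u*v^3*K - 5*u*v^4
    - 10*u^2*v*K^2 + 15*u^2*v^2*K - 10*u^2*v^3 + 5*u^4*v + u^5"
  have "dim_numerator (K - u - v) u - dim_numerator u v
      = K * (2 * Q + 5 * (u^2 * K * (K - u) * (K + u)))"
    unfolding dim_numerator_def Q_def by (simp add: algebra_simps eval_nat_numeral)
  moreover have "even (u^2 * K * (K - u) * (K + u))"
    by (cases "even u"; cases "even K") auto
  ultimately show ?thesis
    by (auto elim!: evenE)
qed

lemma div_gcd_dvd_if_dvd_mult:
  fixes K n d :: "'a :: semiring_gcd"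
  assumes "n \<noteq> 0" and "K dvd n * d"
  shows "K div gcd K n dvd d"
proof -
  define g where "g = gcd K n"
  have "g \<noteq> 0"
    using assms(1) by (simp add: g_def)
  have "g * (K div g) dvd g * ((n div g) * d)"
    using assms(2) by (simp add: g_def mult.assoc[symmetric])
  then have "K div g dvd (n div g) * d"
    using \<open>g \<noteq> 0\<close> by simp
  moreover have "coprime (K div g) (n div g)"
    using assms(1) by (simp add: g_def div_gcd_coprime)
  ultimately show ?thesis
    by (simp add: g_def coprime_dvd_mult_right_iff)
qed

lemma D_rotate_cong:
  fixes a0 a1 a2 K :: int
  assumes "a0 + a1 + a2 + 3 = K"
  shows "K div gcd K 60 dvd D a0 a1 - D a1 a2"
proof (rule div_gcd_dvd_if_dvd_mult)
  have "K - (a1 + 1) - (a2 + 1) = a0 + 1"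
    using assms by simp
  then have diff: "120 * (D a0 a1 - D a1 a2)
      = dim_numerator (K - (a1 + 1) - (a2 + 1)) (a1 + 1) - dim_numerator (a1 + 1) (a2 + 1)"
    by (simp only: D_eq_dim_numerator_div right_diff_distrib dvd_mult_div_cancel dvd_dim_numerator)
  obtain R where "dim_numerator (K - (a1 + 1) - (a2 + 1)) (a1 + 1) - dim_numerator (a1 + 1) (a2 + 1)
      = 2 * K * R"
    using dim_numerator_rotate_diff[of K "a1 + 1" "a2 + 1"] by (elim dvdE)
  with diff have "60 * (D a0 a1 - D a1 a2) = K * R"
    by simp
  then show "K dvd 60 * (D a0 a1 - D a1 a2)"
    by simp
qed simp

theorem theorem2:
  fixes k a0 a1 a2 :: int
  assumes "k \<ge> 0"
    and "a0 + a1 + a2 = k + 3"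
  defines "M \<equiv> (k + 6) div gcd (k + 6) 60"
  shows "D a1 a2 mod M = D a0 a1 mod M \<and> D a0 a1 mod M = D a2 a0 mod M"
proof -
  have "M dvd D a0 a1 - D a1 a2"
    unfolding M_def by (rule D_rotate_cong) (use assms(2) in simp)
  moreover have "M dvd D a2 a0 - D a0 a1"
    unfolding M_def by (rule D_rotate_cong) (use assms(2) in simp)
  ultimately show ?thesis
    by (simp add: mod_eq_dvd_iff dvd_diff_commute)
qed

end
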